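(* Let $R$ be a commutative Noetherian ring with unity. Any two distinct associated primes of $R$ (viewed as vertices of $\Gamma_E(R)$) are joined by an edge in $\Gamma_E(R)$. Furthermore, every vertex $[v]$ of $\Gamma_E(R)$ is either an associated prime or is adjacent to a vertex $[z]$ such that $\operatorname{ann}(z)$ is an associated prime which is a maximal element of $\mathfrak F=\{\operatorname{ann}(x)\mid 0\neq x\in R\}$.
   Context: For $x,y\in R$ write $x\sim y$ iff $\operatorname{ann}(x)=\operatorname{ann}(y)$; this is an equivalence relation, $[x]$ denotes the class of $x$, and $[x]\cdot[y]=[xy]$ is well defined. Let $Z^*(R)$ be the set of nonzero zero divisors of $R$. The graph $\Gamma_E(R)$ is the simple graph whose vertices are the classes $[x]$ with $x\in Z^*(R)$, two distinct vertices $[x],[y]$ being adjacent iff $xy=0$. A prime ideal $\mathfrak p$ is an associated prime of $R$ if $\mathfrak p=\operatorname{ann}(y)$ for some $y\in R$; the map $\mathfrak p=\operatorname{ann}(y)\mapsto[y]$ injects the set $\operatorname{Ass}(R)$ of associated primes into the vertex set, and a vertex $[y]$ is called an associated prime if $\operatorname{ann}(y)$ is a prime ideal. *)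

theory Defs
  imports "HOL-Algebra.Algebra"
begin

definition ann :: "('a, 'b) ring_scheme \<Rightarrow> 'a \<Rightarrow> 'a set" where
  "ann R x = {y \<in> carrier R. x \<otimes>\<^bsub>R\<^esub> y = \<zero>\<^bsub>R\<^esub>}"

definition zdiv_star :: "('a, 'b) ring_scheme \<Rightarrow> 'a set" where
  "zdiv_star R = {x \<in> carrier R. x \<noteq> \<zero>\<^bsub>R\<^esub> \<and>
      (\<exists>y \<in> carrier R. y \<noteq> \<zero>\<^bsub>R\<^esub> \<and> x \<otimes>\<^bsub>R\<^esub> y = \<zero>\<^bsub>R\<^esub>)}"

definition ann_class :: "('a, 'b) ring_scheme \<Rightarrow> 'a \<Rightarrow> 'a set" where
  "ann_class R x = {y \<in> carrier R. ann R y = ann R x}"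

definition GE_vertices :: "('a, 'b) ring_scheme \<Rightarrow> 'a set set" where
  "GE_vertices R = ann_class R ` zdiv_star R"

text \<open>Adjacency in Gamma_E(R): distinct vertices [x],[y] with xy = 0
  (independent of representatives).\<close>
definition GE_adj :: "('a, 'b) ring_scheme \<Rightarrow> 'a set \<Rightarrow> 'a set \<Rightarrow> bool" where
  "GE_adj R A B \<longleftrightarrow> A \<in> GE_vertices R \<and> B \<in> GE_vertices R \<and> A \<noteq> B \<and>
      (\<exists>x \<in> A. \<exists>y \<in> B. x \<otimes>\<^bsub>R\<^esub> y = \<zero>\<^bsub>R\<^esub>)"

definition annF :: "('a, 'b) ring_scheme \<Rightarrow> 'a set set" where
  "annF R = {ann R x | x. x \<in> carrier R \<and> x \<noteq> \<zero>\<^bsub>R\<^esub>}"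

definition maximal_in :: "'a set set \<Rightarrow> 'a set \<Rightarrow> bool" where
  "maximal_in F I \<longleftrightarrow> I \<in> F \<and> (\<forall>J \<in> F. I \<subseteq> J \<longrightarrow> J = I)"

end

theory Submission imports Defs begin

text \<open>If ann(y) and ann(z) are distinct primes, some a lies in one but not the other,
  say ay = 0 but az \<noteq> 0; then ay \<in> ann(z) and primality give zy = 0. For a vertex [v]
  with ann(v) not prime, choose u \<noteq> 0 with vu = 0. In a Noetherian ring ann(u) lies in
  a maximal member ann(z) of the family of annihilators of nonzero elements; maximality
  makes ann(z) prime, and v \<in> ann(u) \<subseteq> ann(z) gives the edge [v] -- [z].\<close>

lemma (in cring) ann_ideal:
  assumes x: "x \<in> carrier R"
  shows "ideal (ann R x) R"
proof (rule idealI)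
  show "ring R" by (rule ring_axioms)
  show "subgroup (ann R x) (add_monoid R)"
  proof
    show "ann R x \<subseteq> carrier (add_monoid R)" by (auto simp: ann_def)
    fix a b assume "a \<in> ann R x" "b \<in> ann R x"
    then show "a \<otimes>\<^bsub>add_monoid R\<^esub> b \<in> ann R x"
      using x by (auto simp: ann_def r_distr)
  next
    show "\<one>\<^bsub>add_monoid R\<^esub> \<in> ann R x" using x by (auto simp: ann_def)
  next
    fix a assume "a \<in> ann R x"
    then show "inv\<^bsub>add_monoid R\<^esub> a \<in> ann R x"
      using x by (auto simp: ann_def a_inv_def[symmetric] r_minus)
  qed
next
  fix a y assume "a \<in> ann R x" "y \<in> carrier R"
  then show "y \<otimes> a \<in> ann R x"
    using x by (auto simp: ann_def) (metis m_lcomm r_null)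
next
  fix a y assume "a \<in> ann R x" "y \<in> carrier R"
  then show "a \<otimes> y \<in> ann R x"
    using x by (auto simp: ann_def) (metis m_assoc l_null)
qed

lemma (in cring) mem_ann_iff:
  assumes "x \<in> carrier R" "y \<in> carrier R"
  shows "y \<in> ann R x \<longleftrightarrow> x \<otimes> y = \<zero>"
  using assms by (simp add: ann_def)

lemma (in cring) ann_eq_carrier_iff:
  assumes "x \<in> carrier R"
  shows "ann R x = carrier R \<longleftrightarrow> x = \<zero>"
proof
  assume "ann R x = carrier R"
  then have "x \<otimes> \<one> = \<zero>" by (auto simp: ann_def)
  then show "x = \<zero>" using assms by simp
qed (auto simp: ann_def)

lemma (in cring) ann_subset_ann_mult:
  assumes "x \<in> carrier R" "a \<in> carrier R"
  shows "ann R x \<subseteq> ann R (a \<otimes> x)"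
  using assms by (auto simp: ann_def) (metis m_assoc m_comm r_null m_closed)

lemma (in cring) mem_ann_mult_iff:
  assumes "x \<in> carrier R" "a \<in> carrier R" "b \<in> carrier R"
  shows "b \<in> ann R (a \<otimes> x) \<longleftrightarrow> a \<otimes> b \<in> ann R x"
  using assms by (simp add: ann_def m_assoc m_comm m_lcomm)

lemma (in cring) maximal_ann_is_prime:
  assumes z: "z \<in> carrier R" "z \<noteq> \<zero>" and max: "maximal_in (annF R) (ann R z)"
  shows "primeideal (ann R z) R"
proof (rule primeidealI[OF ann_ideal[OF z(1)] is_cring])
  show "carrier R \<noteq> ann R z" using ann_eq_carrier_iff[OF z(1)] z(2) by auto
  fix a b assume a: "a \<in> carrier R" and b: "b \<in> carrier R" and ab: "a \<otimes> b \<in> ann R z"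
  show "a \<in> ann R z \<or> b \<in> ann R z"
  proof (rule disjCI)
    assume "b \<notin> ann R z"
    then have "b \<otimes> z \<noteq> \<zero>" using b z by (simp add: ann_def m_comm)
    then have "ann R (b \<otimes> z) \<in> annF R" using b z by (auto simp: annF_def)
    then have "ann R (b \<otimes> z) = ann R z"
      using max ann_subset_ann_mult[OF z(1) b] by (auto simp: maximal_in_def)
    moreover have "a \<in> ann R (b \<otimes> z)"
      using mem_ann_mult_iff[OF z(1) b a] ab a b by (simp add: m_comm)
    ultimately show "a \<in> ann R z" by simp
  qed
qed

lemma (in noetherian_ring) ex_maximal_in_ideal_family:
  assumes ideals: "F \<subseteq> {I. ideal I R}" and I: "I \<in> F"
  shows "\<exists>M. maximal_in F M \<and> I \<subseteq> M"
proof -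
  define S where "S = {J \<in> F. I \<subseteq> J}"
  have "\<exists>M\<in>S. \<forall>J\<in>S. M \<subseteq> J \<longrightarrow> J = M"
  proof (rule subset_Zorn_nonempty)
    show "S \<noteq> {}" using I by (auto simp: S_def)
    fix C assume "C \<noteq> {}" and chain: "subset.chain S C"
    have "S \<subseteq> {I. ideal I R}" using ideals by (auto simp: S_def)
    then have "subset.chain {I. ideal I R} C"
      using chain unfolding pred_on.chain_def by blast
    then have "\<Union>C \<in> C" using ideal_chain_is_trivial \<open>C \<noteq> {}\<close> by blast
    then show "\<Union>C \<in> S" using chain unfolding pred_on.chain_def by blast
  qed
  then obtain M where "M \<in> S" "\<forall>J\<in>S. M \<subseteq> J \<longrightarrow> J = M" by blast
  then show ?thesis unfolding maximal_in_def S_def by blast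
qed

lemma (in cring) mem_ann_if_prime:
  assumes y: "y \<in> carrier R" and z: "z \<in> carrier R" and prime_z: "primeideal (ann R z) R"
    and "a \<in> ann R y" "a \<notin> ann R z"
  shows "y \<in> ann R z"
proof -
  have a: "a \<in> carrier R" "y \<otimes> a = \<zero>" using assms(4) by (auto simp: ann_def)
  then have "a \<otimes> y \<in> ann R z" using y z by (simp add: ann_def m_comm)
  then show ?thesis using primeideal.I_prime[OF prime_z a(1) y] assms(5) by blast
qed

lemma (in cring) prime_anns_annihilate:
  assumes y: "y \<in> carrier R" and z: "z \<in> carrier R"
    and prime_y: "primeideal (ann R y) R" and prime_z: "primeideal (ann R z) R"
    and ne: "ann R y \<noteq> ann R z"
  shows "y \<otimes> z = \<zero>"
proof (cases "ann R y \<subseteq> ann R z")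
  case True
  then obtain a where "a \<in> ann R z" "a \<notin> ann R y" using ne by blast
  then have "z \<in> ann R y" using mem_ann_if_prime[OF z y prime_y] by blast
  then show ?thesis using y z by (simp add: mem_ann_iff)
next
  case False
  then obtain a where "a \<in> ann R y" "a \<notin> ann R z" by blast
  then have "y \<in> ann R z" using mem_ann_if_prime[OF y z prime_z] by blast
  then show ?thesis using y z by (simp add: mem_ann_iff m_comm)
qed

lemma (in cring) zdiv_star_if_mult_zero:
  assumes "x \<in> carrier R" "y \<in> carrier R" "x \<noteq> \<zero>" "y \<noteq> \<zero>" "x \<otimes> y = \<zero>"
  shows "x \<in> zdiv_star R"
  using assms by (auto simp: zdiv_star_def)

lemma (in cring) GE_adj_if_mult_zero:
  assumes "x \<in> carrier R" "y \<in> carrier R" "x \<noteq> \<zero>" "y \<noteq> \<zero>"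
    and "x \<otimes> y = \<zero>" and "ann R x \<noteq> ann R y"
  shows "GE_adj R (ann_class R x) (ann_class R y)"
proof -
  have "x \<in> zdiv_star R" "y \<in> zdiv_star R"
    using assms zdiv_star_if_mult_zero by (auto simp: m_comm)
  moreover have "ann_class R x \<noteq> ann_class R y"
    using assms(1,2,6) by (auto simp: ann_class_def)
  ultimately show ?thesis
    using assms(1,2,5) by (auto simp: GE_adj_def GE_vertices_def ann_class_def)
qed

lemma (in cring) GE_adj_if_prime_anns:
  assumes y: "y \<in> carrier R" and z: "z \<in> carrier R"
    and prime_y: "primeideal (ann R y) R" and prime_z: "primeideal (ann R z) R"
    and ne: "ann R y \<noteq> ann R z"
  shows "GE_adj R (ann_class R y) (ann_class R z)"
proof (rule GE_adj_if_mult_zero[OF y z _ _ prime_anns_annihilate[OF assms] ne])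
  show "y \<noteq> \<zero>" "z \<noteq> \<zero>"
    using primeideal.I_notcarr[OF prime_y] primeideal.I_notcarr[OF prime_z]
      ann_eq_carrier_iff[OF y] ann_eq_carrier_iff[OF z] by auto
qed

lemma (in cring) ex_maximal_ann_above:
  assumes "noetherian_ring R" and u: "u \<in> carrier R" "u \<noteq> \<zero>"
  shows "\<exists>z \<in> carrier R. z \<noteq> \<zero> \<and> ann R u \<subseteq> ann R z \<and> maximal_in (annF R) (ann R z)"
proof -
  have "annF R \<subseteq> {I. ideal I R}" by (auto simp: annF_def ann_ideal)
  moreover have "ann R u \<in> annF R" using u by (auto simp: annF_def)
  ultimately obtain M where max: "maximal_in (annF R) M" and "ann R u \<subseteq> M"
    using noetherian_ring.ex_maximal_in_ideal_family[OF assms(1)] by blast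
  moreover obtain z where "z \<in> carrier R" "z \<noteq> \<zero>" "M = ann R z"
    using max by (auto simp: maximal_in_def annF_def)
  ultimately show ?thesis by blast
qed

lemma (in cring) GE_adj_maximal_ann_if_not_prime:
  assumes "noetherian_ring R" and "v \<in> zdiv_star R" and not_prime: "\<not> primeideal (ann R v) R"
  shows "\<exists>z \<in> carrier R. GE_adj R (ann_class R v) (ann_class R z) \<and>
           primeideal (ann R z) R \<and> maximal_in (annF R) (ann R z)"
proof -
  obtain u where u: "u \<in> carrier R" "u \<noteq> \<zero>" "v \<in> ann R u"
    and v: "v \<in> carrier R" "v \<noteq> \<zero>"
    using assms(2) by (auto simp: zdiv_star_def mem_ann_iff m_comm)
  then obtain z where z: "z \<in> carrier R" "z \<noteq> \<zero>"
    and "ann R u \<subseteq> ann R z" and max: "maximal_in (annF R) (ann R z)"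
    using ex_maximal_ann_above[OF assms(1)] by blast
  then have "v \<in> ann R z" using u(3) by blast
  then have vz: "v \<otimes> z = \<zero>" using v(1) z(1) by (simp add: mem_ann_iff m_comm)
  have prime_z: "primeideal (ann R z) R" using maximal_ann_is_prime[OF z max] .
  then have "ann R v \<noteq> ann R z" using not_prime by auto
  then have "GE_adj R (ann_class R v) (ann_class R z)"
    using GE_adj_if_mult_zero[OF v(1) z(1) v(2) z(2) vz] by blast
  then show ?thesis using z(1) prime_z max by blast
qed

theorem lemma1p2:
  fixes R :: "('a, 'b) ring_scheme"
  assumes "cring R" and "noetherian_ring R"
  shows "(\<forall>y \<in> carrier R. \<forall>z \<in> carrier R.
            primeideal (ann R y) R \<and> primeideal (ann R z) R \<and> ann R y \<noteq> ann R z
            \<longrightarrow> GE_adj R (ann_class R y) (ann_class R z))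
       \<and> (\<forall>v \<in> zdiv_star R.
            primeideal (ann R v) R \<or>
            (\<exists>z \<in> carrier R. GE_adj R (ann_class R v) (ann_class R z) \<and>
               primeideal (ann R z) R \<and> maximal_in (annF R) (ann R z)))"
  using cring.GE_adj_if_prime_anns[OF assms(1)]
    cring.GE_adj_maximal_ann_if_not_prime[OF assms]
  by blast

end
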